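(* Let $\Lambda$ be a positive integer, $r\in[\Lambda-1]$, and $K_\alpha\ge 0$ integers for $\alpha\in[\Lambda-r]$, not all zero. For the MADC model with Generalized Combinatorial MRG (GC-MRG) having $\Lambda$ mapper nodes and $K=\sum_{\alpha\in[\Lambda-r]}K_\alpha\binom{\Lambda}{\alpha}$ reducer nodes, the computation load is $r$ and the communication load $$L(r)=\frac{1}{K}\sum_{\alpha\in[\Lambda-r]}\frac{K_\alpha\binom{\Lambda-r}{\alpha}}{\binom{r+\alpha}{r}-1}$$ is achievable.
   Context: Notation: $[0,n)=\{0,1,\dots,n-1\}$, $[n]=\{1,\dots,n\}$. MADC (multi-access distributed computing) model: There are $\Lambda$ mapper nodes indexed by $[0,\Lambda)$ and $K$ reducer nodes. There are $N$ input files $w_0,\dots,w_{N-1}\in\mathbb{F}_{2^d}$ and $Q$ output functions $\phi_q:\mathbb{F}_{2^d}^N\to\mathbb{F}_{2^b}$, $q\in[0,Q)$, of the form $\phi_q(w_0,\dots,w_{N-1})=h_q(v_{q,0},\dots,v_{q,N-1})$, where $v_{q,n}=g_{q,n}(w_n)\in\mathbb{F}_{2^t}$ is called an intermediate value (IV). Each reducer node $k$ is assigned a set $\mathcal W_k\subseteq[0,Q)$ of $Q/K$ output functions, these sets being pairwise disjoint. The files are partitioned into $F$ disjoint batches of $N/F$ files each. Map phase: each mapper node $\lambda$ stores a set $M_\lambda$ of batches and computes all IVs $v_{q,n}$, $q\in[0,Q)$, for all files $w_n$ in its stored batches. Each reducer node is connected to a set of mapper nodes and has access to every batch stored at any mapper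 node it is connected to, together with all IVs computed from those batches. Shuffle phase: each reducer node $k$ broadcasts to all other reducer nodes, error-free, a message $\mathbf X_k$ of $l_k$ bits that is a function of the IVs it has access to. Reduce phase: each reducer node $k$ must recover all IVs $v_{q,n}$ with $q\in\mathcal W_k$, $n\in[0,N)$, from the received messages and the IVs it has access to. The computation load is $r=\sum_{\lambda}|M_\lambda|/F$ and the communication load is $L=\sum_{k}l_k/(QNt)$. A communication load $L$ is achievable for a given model if there exists a shuffle/reduce scheme satisfying all decoding requirements that attains $L$ (for a suitable choice of the number of files per batch, the number of functions per reducer, and the IV length $t$). GC-MRG (Generalized Combinatorial MRG): the files are split into $F=\binom{\Lambda}{r}$ batches $B_T$, one for each $T\subset[0,\Lambda)$ with $|T|=r$; mapper node $\lambda$ stores exactly the batches $B_T$ with $\lambda\in T$; for each $\alpha\in[\Lambda-r]$ and each $\alpha$-subset $U\subset[0,\Lambda)$ there are exactly $K_\alpha$ reducer nodes connected exactly to the mapper nodes in $U$ (such a reducer has access to $B_T$ iff $T\cap U\neq\emptyset$). (Reducer nodes connected to more than $\Lambda-r$ mapper nodes would access all batches and are not counted.) *)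

theory Defs
  imports Complex_Main
begin

text \<open>Mapper nodes are 0..<Lam. Batches are indexed by the r-subsets T of mapper nodes.\<close>
definition rsubsets :: "nat \<Rightarrow> nat \<Rightarrow> nat set set" where
  "rsubsets Lam r = {T. T \<subseteq> {0..<Lam} \<and> card T = r}"

text \<open>Mapper node lam stores exactly the batches B_T with lam in T; computation load
  = (sum over mappers of number of stored batches) / F.\<close>
definition gc_comp_load :: "nat \<Rightarrow> nat \<Rightarrow> real" where
  "gc_comp_load Lam r =
     (\<Sum>lam<Lam. real (card {T \<in> rsubsets Lam r. lam \<in> T})) / real (card (rsubsets Lam r))"

text \<open>Reducer nodes of GC-MRG: pairs (U, j) where U is an alpha-subset of mappers,
  1 <= alpha <= Lam - r, and j < K_alpha enumerates the K_alpha reducers connected to U.\<close>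
definition gc_reducers :: "nat \<Rightarrow> nat \<Rightarrow> (nat \<Rightarrow> nat) \<Rightarrow> (nat set \<times> nat) set" where
  "gc_reducers Lam r Ka = {(U, j). U \<subseteq> {0..<Lam} \<and> 1 \<le> card U \<and> card U \<le> Lam - r \<and> j < Ka (card U)}"

text \<open>An IV assignment v q n gives the t-bit value of v_{q,n} as bits v q n i, i < t.
  Two assignments agree on a set S of (q,n) pairs.\<close>
definition agree_on :: "nat \<Rightarrow> (nat \<times> nat) set \<Rightarrow> (nat \<Rightarrow> nat \<Rightarrow> nat \<Rightarrow> bool)
                         \<Rightarrow> (nat \<Rightarrow> nat \<Rightarrow> nat \<Rightarrow> bool) \<Rightarrow> bool" where
  "agree_on t S v v' = (\<forall>(q, n) \<in> S. \<forall>i<t. v q n i = v' q n i)"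

text \<open>Achievability of communication load L for the GC-MRG MADC model:
  there exist a number bsz > 0 of files per batch (N = bsz * F), a number m > 0 of output
  functions per reducer (Q = m * K), an IV length t > 0, an assignment bat of files to batches
  (each r-subset T gets exactly bsz files), a disjoint assignment W of m functions to each reducer,
  and shuffle encoders E (message of l k bits, depending only on IVs accessible to reducer k),
  such that every reducer can decode its required IVs from all messages and its accessible IVs,
  and the load equals L.\<close>
definition gc_achievable :: "nat \<Rightarrow> nat \<Rightarrow> (nat \<Rightarrow> nat) \<Rightarrow> real \<Rightarrow> bool" where
  "gc_achievable Lam r Ka L =
    (let Red = gc_reducers Lam r Ka; F = card (rsubsets Lam r) in
     \<exists>(bsz::nat) (m::nat) (t::nat) (bat::nat \<Rightarrow> nat set) (W::nat set \<times> nat \<Rightarrow> nat set)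
         (E::nat set \<times> nat \<Rightarrow> (nat \<Rightarrow> nat \<Rightarrow> nat \<Rightarrow> bool) \<Rightarrow> bool list) (l::nat set \<times> nat \<Rightarrow> nat).
       bsz > 0 \<and> m > 0 \<and> t > 0 \<and>
       (let N = bsz * F; Q = m * card Red;
            acc = (\<lambda>k. {(q, n). q < Q \<and> n < N \<and> bat n \<inter> fst k \<noteq> {}});
            req = (\<lambda>k. {(q, n). q \<in> W k \<and> n < N}) in
        (\<forall>n<N. bat n \<in> rsubsets Lam r) \<and>
        (\<forall>T \<in> rsubsets Lam r. card {n. n < N \<and> bat n = T} = bsz) \<and>
        (\<forall>k \<in> Red. W k \<subseteq> {0..<Q} \<and> card (W k) = m) \<and>
        (\<forall>k \<in> Red. \<forall>k' \<in> Red. k \<noteq> k' \<longrightarrow> W k \<inter> W k' = {}) \<and>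
        (\<forall>k \<in> Red. \<forall>v::nat \<Rightarrow> nat \<Rightarrow> nat \<Rightarrow> bool. length (E k v) = l k) \<and>
        (\<forall>k \<in> Red. \<forall>v v'. agree_on t (acc k) v v' \<longrightarrow> E k v = E k v') \<and>
        (\<forall>k \<in> Red. \<forall>v v'. agree_on t (acc k) v v' \<and> (\<forall>j \<in> Red. E j v = E j v')
                        \<longrightarrow> agree_on t (req k) v v') \<and>
        L = (\<Sum>k \<in> Red. real (l k)) / (real Q * real N * real t)))"

end

theory Submission
  imports Defs
begin

text \<open>
  Take one file per batch and one output function per reducer, and let the reducers with the
  same index j form a group.  For an a-subset U of mappers and an r-subset T disjoint from U,
  the IV of reducer (U, j) on the file of batch T is unknown to (U, j) but known to every
  reducer (W, j) with W another a-subset of S = U \<union> T, because T = S - U meets W.  Cut that IV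
  into (r+a choose r) - 1 equal segments, one for each such W.  For every such S and every bit
  offset b, reducer (W, j) broadcasts the XOR over all a-subsets U \<noteq> W of S of the b-th bit of
  the segment labelled W; reducer (U, j) knows every summand except its own, since S - U'
  meets U for U' \<noteq> U.  Each reducer sends (\<Lambda> - a choose r) segments, which gives the load.
\<close>

section \<open>Numberings and parities of finite sets\<close>

definition numbering :: "'a set \<Rightarrow> 'a \<Rightarrow> nat" where
  "numbering A = (SOME h. bij_betw h A {0..<card A})"

lemma bij_betw_numbering: "finite A \<Longrightarrow> bij_betw (numbering A) A {0..<card A}"
  unfolding numbering_def by (rule someI_ex[OF ex_bij_betw_finite_nat])

lemma numbering_less_card: "finite A \<Longrightarrow> x \<in> A \<Longrightarrow> numbering A x < card A"
  using bij_betw_numbering bij_betwE by fastforce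

lemma numbering_inject:
  "finite A \<Longrightarrow> x \<in> A \<Longrightarrow> y \<in> A \<Longrightarrow> numbering A x = numbering A y \<longleftrightarrow> x = y"
  using bij_betw_numbering by (metis bij_betw_imp_inj_on inj_on_eq_iff)

definition listing :: "'a set \<Rightarrow> 'a list" where
  "listing A = (SOME xs. set xs = A \<and> distinct xs)"

lemma set_listing: "finite A \<Longrightarrow> set (listing A) = A"
  and length_listing: "finite A \<Longrightarrow> length (listing A) = card A"
proof -
  assume "finite A"
  then have "set (listing A) = A \<and> distinct (listing A)"
    unfolding listing_def by (rule someI_ex[OF finite_distinct_list])
  then show "set (listing A) = A" "length (listing A) = card A"
    using distinct_card by fastforce+
qed

definition parity :: "('a \<Rightarrow> bool) \<Rightarrow> 'a set \<Rightarrow> bool" where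
  "parity f P = odd (card {x \<in> P. f x})"

lemma parity_cong: "(\<And>x. x \<in> P \<Longrightarrow> f x = g x) \<Longrightarrow> parity f P = parity g P"
  unfolding parity_def by (metis (mono_tags, lifting) Collect_cong)

lemma parity_insert:
  assumes "finite R" "x \<notin> R"
  shows "parity f (insert x R) = (f x \<noteq> parity f R)"
proof -
  have "{y \<in> insert x R. f y} = (if f x then insert x {y \<in> R. f y} else {y \<in> R. f y})"
    by auto
  then show ?thesis
    unfolding parity_def using assms by simp
qed

lemma eq_if_parity_insert_eq:
  assumes "finite R" "x \<notin> R" "\<And>y. y \<in> R \<Longrightarrow> f y = g y"
    and "parity f (insert x R) = parity g (insert x R)"
  shows "f x = g x"
  using assms parity_cong[of R f g] by (simp add: parity_insert) blast

section \<open>Subsets and extensions of a given size\<close>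

definition subsets_of_card :: "'a set \<Rightarrow> nat \<Rightarrow> 'a set set" where
  "subsets_of_card S a = {U. U \<subseteq> S \<and> card U = a}"

lemma finite_subsets_of_card: "finite S \<Longrightarrow> finite (subsets_of_card S a)"
  unfolding subsets_of_card_def by (rule finite_subset[of _ "Pow S"]) auto

lemma card_subsets_of_card: "finite S \<Longrightarrow> card (subsets_of_card S a) = card S choose a"
  unfolding subsets_of_card_def by (rule n_subsets)

lemma Diff_Int_ne_if_same_card:
  assumes "finite S" "U \<in> subsets_of_card S a" "U' \<in> subsets_of_card S a" "U \<noteq> U'"
  shows "(S - U') \<inter> U \<noteq> {}"
proof
  assume "(S - U') \<inter> U = {}"
  then have "U \<subseteq> U'"
    using assms(2) unfolding subsets_of_card_def by blast
  moreover have "finite U'"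
    using assms(1,3) finite_subset unfolding subsets_of_card_def by blast
  moreover have "card U = card U'"
    using assms(2,3) unfolding subsets_of_card_def by simp
  ultimately show False
    using card_subset_eq assms(4) by blast
qed

definition extensions :: "'a set \<Rightarrow> nat \<Rightarrow> 'a set \<Rightarrow> 'a set set" where
  "extensions X r W = {S. W \<subseteq> S \<and> S \<subseteq> X \<and> card S = r + card W}"

lemma finite_extensions: "finite X \<Longrightarrow> finite (extensions X r W)"
  unfolding extensions_def by (rule finite_subset[of _ "Pow X"]) auto

lemma card_extensions:
  assumes "finite X" "W \<subseteq> X"
  shows "card (extensions X r W) = (card X - card W) choose r"
proof -
  have fW: "finite W"
    using assms finite_subset by blast
  have "bij_betw (\<lambda>T. T \<union> W) (subsets_of_card (X - W) r) (extensions X r W)"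
  proof (rule bij_betw_byWitness[where f' = "\<lambda>S. S - W"])
    show "(\<lambda>T. T \<union> W) ` subsets_of_card (X - W) r \<subseteq> extensions X r W"
    proof clarify
      fix T assume "T \<in> subsets_of_card (X - W) r"
      then have "T \<subseteq> X - W" "card T = r" "finite T"
        using assms(1) finite_subset unfolding subsets_of_card_def by auto
      then show "T \<union> W \<in> extensions X r W"
        using assms(2) fW card_Un_disjoint[of T W] unfolding extensions_def by auto
    qed
    show "(\<lambda>S. S - W) ` extensions X r W \<subseteq> subsets_of_card (X - W) r"
      using assms fW
      by (auto simp: subsets_of_card_def extensions_def card_Diff_subset finite_subset)
  qed (auto simp: subsets_of_card_def extensions_def)
  then have "card (extensions X r W) = card (subsets_of_card (X - W) r)"
    by (simp add: bij_betw_same_card)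
  then show ?thesis
    using assms fW by (simp add: card_subsets_of_card card_Diff_subset)
qed

lemma extensions_same_card:
  "S \<in> extensions X r W \<Longrightarrow> U \<in> subsets_of_card S (card W) \<Longrightarrow> S \<in> extensions X r U"
  unfolding extensions_def subsets_of_card_def by auto

lemma Diff_in_subsets_of_card:
  assumes "finite X" "S \<in> extensions X r W" "U \<in> subsets_of_card S (card W)"
  shows "S - U \<in> subsets_of_card X r"
  using assms finite_subset[of S X] finite_subset[of U S]
  by (auto simp: extensions_def subsets_of_card_def card_Diff_subset)

lemma card_subsets_of_card_extension:
  assumes "finite X" "S \<in> extensions X r W"
  shows "card (subsets_of_card S (card W)) = (r + card W) choose r"
proof -
  have "card S = r + card W" "finite S"
    using assms finite_subset[of S X] unfolding extensions_def by auto
  then show ?thesis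
    by (metis card_subsets_of_card binomial_symmetric add_diff_cancel_left' le_add1 add.commute)
qed

definition segment :: "'a set \<Rightarrow> 'a set \<Rightarrow> 'a set \<Rightarrow> nat" where
  "segment S U = numbering (subsets_of_card S (card U) - {U})"

lemma segment_less:
  assumes "finite S" "U \<subseteq> S" "W \<in> subsets_of_card S (card U)" "W \<noteq> U"
  shows "segment S U W < card (subsets_of_card S (card U)) - 1"
proof -
  have "U \<in> subsets_of_card S (card U)"
    using assms(2) unfolding subsets_of_card_def by simp
  then show ?thesis
    using assms numbering_less_card[of "subsets_of_card S (card U) - {U}" W]
    by (simp add: segment_def finite_subsets_of_card)
qed

lemma segment_surj:
  assumes "finite S" "U \<subseteq> S" "c < card (subsets_of_card S (card U)) - 1"
  obtains W where "W \<in> subsets_of_card S (card U)" "W \<noteq> U" "segment S U W = c"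
proof -
  let ?A = "subsets_of_card S (card U) - {U}"
  have "U \<in> subsets_of_card S (card U)"
    using assms(2) unfolding subsets_of_card_def by simp
  then have "c \<in> numbering ?A ` ?A"
    using assms bij_betw_numbering[of ?A] by (simp add: bij_betw_def finite_subsets_of_card)
  then show ?thesis
    using that unfolding segment_def by blast
qed

text \<open>The IV length is a common multiple of all segment counts (r+a choose r) - 1.\<close>

definition iv_length :: "nat \<Rightarrow> nat \<Rightarrow> nat" where
  "iv_length Lam r = (\<Prod>a\<in>{1..Lam - r}. ((r + a) choose r) - 1)"

definition segment_length :: "nat \<Rightarrow> nat \<Rightarrow> nat \<Rightarrow> nat" where
  "segment_length Lam r a = iv_length Lam r div (((r + a) choose r) - 1)"

lemma two_le_choose_add:
  assumes "1 \<le> r" "1 \<le> a"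
  shows "2 \<le> (r + a) choose r"
proof -
  obtain r' a' where "r = Suc r'" "a = Suc a'"
    using assms by (metis Suc_le_D One_nat_def)
  then have "(r + a) choose r = (r' + Suc a' choose r') + (r' + Suc a' choose Suc r')"
    by simp
  moreover have "0 < r' + Suc a' choose r'" "0 < r' + Suc a' choose Suc r'"
    by simp_all
  ultimately show ?thesis
    by linarith
qed

lemma iv_length_pos: "1 \<le> r \<Longrightarrow> 0 < iv_length Lam r"
  unfolding iv_length_def using two_le_choose_add by (intro prod_pos) fastforce

lemma segment_length_mult:
  assumes "a \<in> {1..Lam - r}"
  shows "(((r + a) choose r) - 1) * segment_length Lam r a = iv_length Lam r"
proof -
  have "((r + a) choose r) - 1 dvd iv_length Lam r"
    unfolding iv_length_def using assms by (intro dvd_prodI) auto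
  then show ?thesis
    unfolding segment_length_def by simp
qed

lemma segment_length_pos: "1 \<le> r \<Longrightarrow> a \<in> {1..Lam - r} \<Longrightarrow> 0 < segment_length Lam r a"
  using segment_length_mult iv_length_pos by (metis gr0I mult_0_right)

section \<open>Reducers and batches\<close>

lemma mem_gc_reducers_iff:
  "(U, j) \<in> gc_reducers Lam r Ka \<longleftrightarrow>
     U \<subseteq> {0..<Lam} \<and> 1 \<le> card U \<and> card U \<le> Lam - r \<and> j < Ka (card U)"
  unfolding gc_reducers_def by simp

lemma finite_gc_reducers: "finite (gc_reducers Lam r Ka)"
proof -
  have "gc_reducers Lam r Ka \<subseteq> Pow {0..<Lam} \<times> {..<Max (Ka ` {0..Lam})}"
  proof (rule subrelI)
    fix U j assume "(U, j) \<in> gc_reducers Lam r Ka"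
    then have "U \<subseteq> {0..<Lam}" "j < Ka (card U)"
      unfolding gc_reducers_def by auto
    moreover have "Ka (card U) \<le> Max (Ka ` {0..Lam})"
      using card_mono[OF _ \<open>U \<subseteq> {0..<Lam}\<close>] by (intro Max_ge) auto
    ultimately show "(U, j) \<in> Pow {0..<Lam} \<times> {..<Max (Ka ` {0..Lam})}"
      by auto
  qed
  then show ?thesis
    by (rule finite_subset) simp
qed

lemma sum_gc_reducers_by_card:
  fixes f :: "nat \<Rightarrow> 'b::comm_semiring_1"
  shows "(\<Sum>k\<in>gc_reducers Lam r Ka. f (card (fst k))) =
           (\<Sum>a\<in>{1..Lam - r}. of_nat (Ka a * (Lam choose a)) * f a)"
proof -
  let ?R = "gc_reducers Lam r Ka"
  have "(\<Sum>k\<in>?R. f (card (fst k))) =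
          (\<Sum>a\<in>{1..Lam - r}. \<Sum>k\<in>{k \<in> ?R. card (fst k) = a}. f (card (fst k)))"
    by (rule sum.group[symmetric, OF finite_gc_reducers]) (auto simp: gc_reducers_def)
  also have "\<dots> = (\<Sum>a\<in>{1..Lam - r}. of_nat (Ka a * (Lam choose a)) * f a)"
  proof (rule sum.cong[OF refl])
    fix a assume "a \<in> {1..Lam - r}"
    then have R_a: "{k \<in> ?R. card (fst k) = a} = subsets_of_card {0..<Lam} a \<times> {..<Ka a}"
      unfolding gc_reducers_def subsets_of_card_def by auto
    have "(\<Sum>k\<in>{k \<in> ?R. card (fst k) = a}. f (card (fst k))) =
            (\<Sum>k\<in>subsets_of_card {0..<Lam} a \<times> {..<Ka a}. f a)"
      by (rule sum.cong) (auto simp: R_a subsets_of_card_def)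
    then show "(\<Sum>k\<in>{k \<in> ?R. card (fst k) = a}. f (card (fst k))) =
                 of_nat (Ka a * (Lam choose a)) * f a"
      by (simp add: card_cartesian_product card_subsets_of_card mult.commute)
  qed
  finally show ?thesis .
qed

lemma rsubsets_eq: "rsubsets Lam r = subsets_of_card {0..<Lam} r"
  unfolding rsubsets_def subsets_of_card_def ..

lemma finite_rsubsets: "finite (rsubsets Lam r)"
  by (simp add: rsubsets_eq finite_subsets_of_card)

lemma card_rsubsets: "card (rsubsets Lam r) = Lam choose r"
  by (simp add: rsubsets_eq card_subsets_of_card)

definition batch :: "nat \<Rightarrow> nat \<Rightarrow> nat \<Rightarrow> nat set" where
  "batch Lam r = inv_into (rsubsets Lam r) (numbering (rsubsets Lam r))"

lemma batch_in_rsubsets: "n < card (rsubsets Lam r) \<Longrightarrow> batch Lam r n \<in> rsubsets Lam r"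
  and numbering_batch: "n < card (rsubsets Lam r) \<Longrightarrow> numbering (rsubsets Lam r) (batch Lam r n) = n"
  and batch_numbering: "T \<in> rsubsets Lam r \<Longrightarrow> batch Lam r (numbering (rsubsets Lam r) T) = T"
  using bij_betw_numbering[OF finite_rsubsets, of Lam r]
  by (auto simp: batch_def bij_betw_def f_inv_into_f inv_into_into)

definition accessible :: "nat \<Rightarrow> nat \<Rightarrow> (nat \<Rightarrow> nat) \<Rightarrow> nat set \<Rightarrow> (nat \<times> nat) set" where
  "accessible Lam r Ka U =
     {(q, n). q < card (gc_reducers Lam r Ka) \<and> n < card (rsubsets Lam r) \<and> batch Lam r n \<inter> U \<noteq> {}}"

section \<open>The coded shuffle\<close>

fun iv_bit :: "(nat \<Rightarrow> nat \<Rightarrow> nat \<Rightarrow> bool) \<Rightarrow> nat \<times> nat \<times> nat \<Rightarrow> bool" where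
  "iv_bit v (q, n, i) = v q n i"

lemma iv_bit_eq_if_agree:
  "agree_on t A v v' \<Longrightarrow> (q, n) \<in> A \<Longrightarrow> i < t \<Longrightarrow> iv_bit v (q, n, i) = iv_bit v' (q, n, i)"
  unfolding agree_on_def by auto

text \<open>Bit b of the segment labelled W of the IV of reducer (U, j) on the file of batch S - U.\<close>

definition coded_bit ::
  "nat \<Rightarrow> nat \<Rightarrow> (nat \<Rightarrow> nat) \<Rightarrow> nat \<Rightarrow> nat set \<Rightarrow> nat \<Rightarrow> nat set \<Rightarrow> nat set \<Rightarrow> nat \<times> nat \<times> nat"
  where
  "coded_bit Lam r Ka j S b W U =
     (numbering (gc_reducers Lam r Ka) (U, j), numbering (rsubsets Lam r) (S - U),
      segment S U W * segment_length Lam r (card W) + b)"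

definition message_slots :: "nat \<Rightarrow> nat \<Rightarrow> nat set \<times> nat \<Rightarrow> (nat set \<times> nat) set" where
  "message_slots Lam r k =
     extensions {0..<Lam} r (fst k) \<times> {..<segment_length Lam r (card (fst k))}"

fun coded_bits ::
  "nat \<Rightarrow> nat \<Rightarrow> (nat \<Rightarrow> nat) \<Rightarrow> nat set \<times> nat \<Rightarrow> nat set \<times> nat \<Rightarrow> (nat \<times> nat \<times> nat) set"
  where
  "coded_bits Lam r Ka (W, j) (S, b) =
     coded_bit Lam r Ka j S b W ` (subsets_of_card S (card W) - {W})"

definition encode ::
  "nat \<Rightarrow> nat \<Rightarrow> (nat \<Rightarrow> nat) \<Rightarrow> nat set \<times> nat \<Rightarrow> (nat \<Rightarrow> nat \<Rightarrow> nat \<Rightarrow> bool) \<Rightarrow> bool list"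
  where
  "encode Lam r Ka k v =
     map (\<lambda>x. parity (iv_bit v) (coded_bits Lam r Ka k x)) (listing (message_slots Lam r k))"

lemma finite_message_slots: "finite (message_slots Lam r k)"
  unfolding message_slots_def by (simp add: finite_extensions)

lemma length_encode: "length (encode Lam r Ka k v) = card (message_slots Lam r k)"
  by (simp add: encode_def length_listing finite_message_slots)

lemma encode_eq_iff:
  "encode Lam r Ka k v = encode Lam r Ka k v' \<longleftrightarrow>
     (\<forall>x\<in>message_slots Lam r k.
        parity (iv_bit v) (coded_bits Lam r Ka k x) = parity (iv_bit v') (coded_bits Lam r Ka k x))"
  by (simp add: encode_def set_listing finite_message_slots)

lemma slot_subset_in_gc_reducers:
  assumes "(W, j) \<in> gc_reducers Lam r Ka" "S \<in> extensions {0..<Lam} r W"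
    and "U \<in> subsets_of_card S (card W)"
  shows "(U, j) \<in> gc_reducers Lam r Ka"
  using assms by (auto simp: mem_gc_reducers_iff extensions_def subsets_of_card_def)

lemma coded_bit_determined:
  assumes "1 \<le> r" "(W, j) \<in> gc_reducers Lam r Ka" "(S, b) \<in> message_slots Lam r (W, j)"
    and "U \<in> subsets_of_card S (card W)" "U \<noteq> W"
    and "V \<in> subsets_of_card S (card W)" "V \<noteq> U"
    and "agree_on (iv_length Lam r) (accessible Lam r Ka V) v v'"
  shows "iv_bit v (coded_bit Lam r Ka j S b W U) = iv_bit v' (coded_bit Lam r Ka j S b W U)"
proof -
  let ?R = "gc_reducers Lam r Ka" and ?F = "rsubsets Lam r"
  define a where "a = card W"
  define p where "p = segment_length Lam r a"
  have S: "S \<in> extensions {0..<Lam} r W" "b < p"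
    using assms(3) unfolding message_slots_def p_def a_def by auto
  have fS: "finite S" and WS: "W \<subseteq> S"
    using S(1) finite_subset unfolding extensions_def by auto
  have a: "a \<in> {1..Lam - r}"
    using assms(2) unfolding a_def mem_gc_reducers_iff by auto
  have q: "numbering ?R (U, j) < card ?R"
    using slot_subset_in_gc_reducers[OF assms(2) S(1) assms(4)]
    by (simp add: numbering_less_card finite_gc_reducers)
  have T: "S - U \<in> ?F"
    using Diff_in_subsets_of_card[OF _ S(1) assms(4)] by (simp add: rsubsets_eq)
  have n: "numbering ?F (S - U) < card ?F"
    using T by (simp add: numbering_less_card finite_rsubsets)
  have meets: "batch Lam r (numbering ?F (S - U)) \<inter> V \<noteq> {}"
    using Diff_Int_ne_if_same_card[OF fS assms(6,4,7)] T by (simp add: batch_numbering)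
  have "card U = a"
    using assms(4) unfolding a_def subsets_of_card_def by simp
  then have "segment S U W < ((r + a) choose r) - 1"
    using segment_less[of S U W] assms(4,5) WS fS card_subsets_of_card_extension[OF _ S(1)]
    unfolding a_def subsets_of_card_def by auto
  then have "segment S U W * p + b < (((r + a) choose r) - 1) * p"
    using S(2) mult_le_mono1[of "Suc (segment S U W)" "((r + a) choose r) - 1" p] by simp
  then have i: "segment S U W * p + b < iv_length Lam r"
    using segment_length_mult[OF a] unfolding p_def by simp
  show ?thesis
    unfolding coded_bit_def
    by (rule iv_bit_eq_if_agree[OF assms(8)])
      (use q n meets i in \<open>auto simp: accessible_def p_def a_def\<close>)
qed

lemma encode_eq_if_agree:
  assumes "1 \<le> r" "k \<in> gc_reducers Lam r Ka"
    and "agree_on (iv_length Lam r) (accessible Lam r Ka (fst k)) v v'"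
  shows "encode Lam r Ka k v = encode Lam r Ka k v'"
proof -
  obtain W j where k: "k = (W, j)"
    by fastforce
  have "parity (iv_bit v) (coded_bits Lam r Ka (W, j) (S, b)) =
          parity (iv_bit v') (coded_bits Lam r Ka (W, j) (S, b))"
    if slot: "(S, b) \<in> message_slots Lam r (W, j)" for S b
  proof (rule parity_cong)
    fix y assume "y \<in> coded_bits Lam r Ka (W, j) (S, b)"
    then obtain U where "U \<in> subsets_of_card S (card W)" "U \<noteq> W" "y = coded_bit Lam r Ka j S b W U"
      by auto
    moreover have "W \<in> subsets_of_card S (card W)"
      using slot unfolding message_slots_def extensions_def subsets_of_card_def by simp
    ultimately show "iv_bit v y = iv_bit v' y"
      using coded_bit_determined[OF assms(1) assms(2)[unfolded k] slot] assms(3) k by auto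
  qed
  then show ?thesis
    unfolding k encode_eq_iff by auto
qed

lemma coded_bit_covers:
  assumes "1 \<le> r" "(U, j) \<in> gc_reducers Lam r Ka" "T \<in> rsubsets Lam r" "T \<inter> U = {}"
    and "i < iv_length Lam r"
  obtains W b where "(W, j) \<in> gc_reducers Lam r Ka" "(U \<union> T, b) \<in> message_slots Lam r (W, j)"
    "U \<in> subsets_of_card (U \<union> T) (card W)" "U \<noteq> W"
    "coded_bit Lam r Ka j (U \<union> T) b W U =
       (numbering (gc_reducers Lam r Ka) (U, j), numbering (rsubsets Lam r) T, i)"
proof -
  define a where "a = card U"
  define p where "p = segment_length Lam r a"
  define S where "S = U \<union> T"
  have a: "a \<in> {1..Lam - r}" and U: "U \<subseteq> {0..<Lam}"
    using assms(2) unfolding a_def mem_gc_reducers_iff by auto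
  have T: "T \<subseteq> {0..<Lam}" "card T = r"
    using assms(3) unfolding rsubsets_def by auto
  have "card S = r + a"
    unfolding S_def a_def using T U assms(4)
    by (subst card_Un_disjoint) (auto simp: Int_commute intro: finite_subset)
  then have S: "S \<in> extensions {0..<Lam} r U" "finite S"
    unfolding extensions_def S_def a_def using T U finite_subset by auto
  have "0 < p"
    using segment_length_pos[OF assms(1) a] unfolding p_def .
  moreover have "i < (((r + a) choose r) - 1) * p"
    using segment_length_mult[OF a] assms(5) unfolding p_def by simp
  ultimately have "i div p < card (subsets_of_card S a) - 1"
    using card_subsets_of_card_extension[OF _ S(1)]
    by (simp add: a_def less_mult_imp_div_less)
  then obtain W where W: "W \<in> subsets_of_card S a" "W \<noteq> U" "segment S U W = i div p"
    using segment_surj[of S U] S(2) unfolding S_def a_def by auto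
  have cW: "card W = a"
    using W(1) unfolding subsets_of_card_def by simp
  show ?thesis
  proof
    show "(W, j) \<in> gc_reducers Lam r Ka"
      using slot_subset_in_gc_reducers[OF assms(2) S(1)] W(1) by (simp add: a_def)
    show "(U \<union> T, i mod p) \<in> message_slots Lam r (W, j)"
      using extensions_same_card[OF S(1)] W(1) \<open>0 < p\<close>
      by (simp add: message_slots_def cW p_def S_def a_def)
    show "U \<in> subsets_of_card (U \<union> T) (card W)" "U \<noteq> W"
      using W(2) by (auto simp: cW a_def subsets_of_card_def)
    have "S - U = T"
      unfolding S_def using assms(4) by blast
    then show "coded_bit Lam r Ka j (U \<union> T) (i mod p) W U =
       (numbering (gc_reducers Lam r Ka) (U, j), numbering (rsubsets Lam r) T, i)"
      using W(3) by (simp add: coded_bit_def cW p_def S_def)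
  qed
qed

lemma decode:
  assumes "1 \<le> r" "(U, j) \<in> gc_reducers Lam r Ka"
    and "agree_on (iv_length Lam r) (accessible Lam r Ka U) v v'"
    and "\<forall>k\<in>gc_reducers Lam r Ka. encode Lam r Ka k v = encode Lam r Ka k v'"
    and "n < card (rsubsets Lam r)" "i < iv_length Lam r"
  shows "v (numbering (gc_reducers Lam r Ka) (U, j)) n i =
           v' (numbering (gc_reducers Lam r Ka) (U, j)) n i"
proof (cases "batch Lam r n \<inter> U = {}")
  case False
  have "numbering (gc_reducers Lam r Ka) (U, j) < card (gc_reducers Lam r Ka)"
    using assms(2) by (simp add: numbering_less_card finite_gc_reducers)
  then show ?thesis
    using iv_bit_eq_if_agree[OF assms(3) _ assms(6)] False assms(5)
    by (simp add: accessible_def Int_commute)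
next
  case True
  let ?R = "gc_reducers Lam r Ka"
  define T where "T = batch Lam r n"
  have T: "T \<in> rsubsets Lam r" "numbering (rsubsets Lam r) T = n"
    using assms(5) by (simp_all add: T_def batch_in_rsubsets numbering_batch)
  have "T \<inter> U = {}"
    using True by (simp add: T_def)
  then obtain W b where W: "(W, j) \<in> ?R" and slot: "(U \<union> T, b) \<in> message_slots Lam r (W, j)"
    and U: "U \<in> subsets_of_card (U \<union> T) (card W)" "U \<noteq> W"
    and target: "coded_bit Lam r Ka j (U \<union> T) b W U =
                   (numbering ?R (U, j), numbering (rsubsets Lam r) T, i)"
    by (rule coded_bit_covers[OF assms(1,2) T(1) _ assms(6)])
  let ?bit = "coded_bit Lam r Ka j (U \<union> T) b W"
  let ?others = "?bit ` (subsets_of_card (U \<union> T) (card W) - {W, U})"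
  have bits: "coded_bits Lam r Ka (W, j) (U \<union> T, b) = insert (?bit U) ?others"
    using U by auto
  have fresh: "?bit U \<notin> ?others"
  proof
    assume "?bit U \<in> ?others"
    then obtain U' where U'_in: "U' \<in> subsets_of_card (U \<union> T) (card W) - {W, U}"
      and "?bit U = ?bit U'"
      by (rule imageE)
    then have U': "U' \<in> subsets_of_card (U \<union> T) (card W)" "U' \<noteq> U"
      and "numbering ?R (U', j) = numbering ?R (U, j)"
      by (simp_all add: coded_bit_def)
    moreover have "(U', j) \<in> ?R"
      using slot_subset_in_gc_reducers[OF W _ U'(1)] slot by (simp add: message_slots_def)
    ultimately show False
      using assms(2) by (simp add: numbering_inject finite_gc_reducers)
  qed
  have known: "iv_bit v y = iv_bit v' y" if "y \<in> ?others" for y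
    using that coded_bit_determined[OF assms(1) W slot _ _ U(1) _ assms(3)] by auto
  have message: "parity (iv_bit v) (insert (?bit U) ?others) = parity (iv_bit v') (insert (?bit U) ?others)"
    using assms(4) W slot by (metis bits encode_eq_iff)
  have "finite (U \<union> T)"
    using slot unfolding message_slots_def extensions_def by (auto intro: finite_subset)
  then have "finite ?others"
    by (simp add: finite_subsets_of_card)
  then have "iv_bit v (?bit U) = iv_bit v' (?bit U)"
    using fresh known message by (rule eq_if_parity_insert_eq)
  then show ?thesis
    unfolding target T(2) by simp
qed

section \<open>Loads\<close>

lemma choose_mult_swap:
  assumes "a + r \<le> n"
  shows "(n choose a) * ((n - a) choose r) = (n choose r) * ((n - r) choose a)"
proof -
  have "(n choose a) * ((n - a) choose r) = (n choose (a + r)) * ((a + r) choose a)"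
    using choose_mult[of a "a + r" n] assms by simp
  also have "\<dots> = (n choose (a + r)) * ((a + r) choose r)"
    by (metis add_diff_cancel_left' binomial_symmetric le_add1)
  also have "\<dots> = (n choose r) * ((n - r) choose a)"
    using choose_mult[of r "a + r" n] assms by simp
  finally show ?thesis .
qed

lemma card_message_slots:
  "k \<in> gc_reducers Lam r Ka \<Longrightarrow> card (message_slots Lam r k) =
     ((Lam - card (fst k)) choose r) * segment_length Lam r (card (fst k))"
  by (auto simp: message_slots_def card_cartesian_product card_extensions gc_reducers_def)

lemma sum_card_message_slots:
  "(\<Sum>k\<in>gc_reducers Lam r Ka. real (card (message_slots Lam r k))) =
     real (Lam choose r) *
       (\<Sum>a\<in>{1..Lam - r}. real (Ka a * (Lam - r choose a)) * real (segment_length Lam r a))"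
proof -
  have "(\<Sum>k\<in>gc_reducers Lam r Ka. real (card (message_slots Lam r k))) =
          (\<Sum>k\<in>gc_reducers Lam r Ka.
             real (((Lam - card (fst k)) choose r) * segment_length Lam r (card (fst k))))"
    by (simp add: card_message_slots)
  also have "\<dots> = (\<Sum>a\<in>{1..Lam - r}.
                     real (Ka a * (Lam choose a)) * real (((Lam - a) choose r) * segment_length Lam r a))"
    by (rule sum_gc_reducers_by_card)
  also have "\<dots> = (\<Sum>a\<in>{1..Lam - r}. real (Lam choose r) *
                     (real (Ka a * (Lam - r choose a)) * real (segment_length Lam r a)))"
  proof (rule sum.cong[OF refl])
    fix a assume "a \<in> {1..Lam - r}"
    then have "a + r \<le> Lam"
      by auto
    then have "real (Lam choose a) * real ((Lam - a) choose r) =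
                 real (Lam choose r) * real ((Lam - r) choose a)"
      by (simp add: choose_mult_swap flip: of_nat_mult)
    then show "real (Ka a * (Lam choose a)) * real (((Lam - a) choose r) * segment_length Lam r a) =
                 real (Lam choose r) * (real (Ka a * (Lam - r choose a)) * real (segment_length Lam r a))"
      by (simp add: algebra_simps)
  qed
  finally show ?thesis
    by (simp add: sum_distrib_left)
qed

lemma communication_load_eq:
  assumes "1 \<le> r" "r \<le> Lam"
  shows "(\<Sum>k\<in>gc_reducers Lam r Ka. real (card (message_slots Lam r k))) /
           (real (card (gc_reducers Lam r Ka)) * real (card (rsubsets Lam r)) * real (iv_length Lam r))
       = (1 / real (\<Sum>a\<in>{1..Lam - r}. Ka a * (Lam choose a))) *
           (\<Sum>a\<in>{1..Lam - r}. real (Ka a * (Lam - r choose a)) / (real ((r + a) choose r) - 1))"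
proof -
  have segment_share: "real (segment_length Lam r a) / real (iv_length Lam r) =
      1 / (real ((r + a) choose r) - 1)" if "a \<in> {1..Lam - r}" for a
  proof -
    have "real (iv_length Lam r) = (real ((r + a) choose r) - 1) * real (segment_length Lam r a)"
      using segment_length_mult[OF that] two_le_choose_add[OF assms(1)] that
      by (metis One_nat_def Suc_1 Suc_leD atLeastAtMost_iff of_nat_1 of_nat_diff of_nat_mult)
    then show ?thesis
      using segment_length_pos[OF assms(1) that] by simp
  qed
  define x where "x a = real (Ka a * (Lam - r choose a))" for a
  have "card (gc_reducers Lam r Ka) = (\<Sum>a\<in>{1..Lam - r}. Ka a * (Lam choose a))"
    using sum_gc_reducers_by_card[of "\<lambda>_. 1 :: nat" Lam r Ka] by simp
  moreover have "0 < Lam choose r"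
    using assms(2) by simp
  ultimately have "(\<Sum>k\<in>gc_reducers Lam r Ka. real (card (message_slots Lam r k))) /
           (real (card (gc_reducers Lam r Ka)) * real (card (rsubsets Lam r)) * real (iv_length Lam r))
       = (1 / real (\<Sum>a\<in>{1..Lam - r}. Ka a * (Lam choose a))) *
           ((\<Sum>a\<in>{1..Lam - r}. x a * real (segment_length Lam r a)) / real (iv_length Lam r))"
    by (simp add: sum_card_message_slots card_rsubsets x_def)
  also have "\<dots> = (1 / real (\<Sum>a\<in>{1..Lam - r}. Ka a * (Lam choose a))) *
           (\<Sum>a\<in>{1..Lam - r}. x a * (real (segment_length Lam r a) / real (iv_length Lam r)))"
    by (simp add: sum_divide_distrib)
  finally show ?thesis
    by (simp add: segment_share x_def)
qed

lemma gc_comp_load_eq: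
  assumes "r \<le> Lam"
  shows "gc_comp_load Lam r = real r"
proof -
  let ?F = "rsubsets Lam r"
  have "(\<Sum>lam<Lam. card {T \<in> ?F. lam \<in> T}) = (\<Sum>lam<Lam. \<Sum>T\<in>?F. if lam \<in> T then 1 else 0)"
    by (simp add: sum.If_cases finite_rsubsets Int_def)
  also have "\<dots> = (\<Sum>T\<in>?F. \<Sum>lam<Lam. if lam \<in> T then 1 else 0)"
    by (rule sum.swap)
  also have "\<dots> = (\<Sum>T\<in>?F. r)"
  proof (rule sum.cong[OF refl])
    fix T assume "T \<in> ?F"
    then have "T \<subseteq> {..<Lam}" "card T = r"
      unfolding rsubsets_def by auto
    then show "(\<Sum>lam<Lam. if lam \<in> T then 1 else 0) = r"
      by (simp add: sum.If_cases Int_absorb1)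
  qed
  finally have "(\<Sum>lam<Lam. real (card {T \<in> ?F. lam \<in> T})) = real r * real (card ?F)"
    by (simp flip: of_nat_sum of_nat_mult)
  moreover have "0 < card ?F"
    using assms by (simp add: card_rsubsets)
  ultimately show ?thesis
    unfolding gc_comp_load_def by simp
qed

lemma gc_achievable_single_file_single_function:
  fixes Lam r t :: nat and Ka :: "nat \<Rightarrow> nat" and l :: "nat set \<times> nat \<Rightarrow> nat" and L :: real
    and E :: "nat set \<times> nat \<Rightarrow> (nat \<Rightarrow> nat \<Rightarrow> nat \<Rightarrow> bool) \<Rightarrow> bool list"
  defines "R \<equiv> gc_reducers Lam r Ka"
  assumes "0 < t"
    and "\<forall>k\<in>R. \<forall>v. length (E k v) = l k"
    and "\<forall>k\<in>R. \<forall>v v'. agree_on t (accessible Lam r Ka (fst k)) v v' \<longrightarrow> E k v = E k v'"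
    and "\<forall>k\<in>R. \<forall>v v' n i. agree_on t (accessible Lam r Ka (fst k)) v v' \<and> (\<forall>k'\<in>R. E k' v = E k' v')
           \<and> n < card (rsubsets Lam r) \<and> i < t \<longrightarrow> v (numbering R k) n i = v' (numbering R k) n i"
    and "L = (\<Sum>k\<in>R. real (l k)) / (real (card R) * real (card (rsubsets Lam r)) * real t)"
  shows "gc_achievable Lam r Ka L"
proof -
  let ?F = "rsubsets Lam r"
  have "card {n. n < card ?F \<and> batch Lam r n = T} = 1" if "T \<in> ?F" for T
  proof -
    have "{n. n < card ?F \<and> batch Lam r n = T} = {numbering ?F T}"
      using that by (auto simp: batch_numbering numbering_batch numbering_less_card finite_rsubsets)
    then show ?thesis
      by simp
  qed
  moreover have "numbering R k \<noteq> numbering R k'" if "k \<in> R" "k' \<in> R" "k \<noteq> k'" for k k'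
    using that by (simp add: numbering_inject R_def finite_gc_reducers)
  moreover have "numbering R k < card R" if "k \<in> R" for k
    using that by (simp add: numbering_less_card R_def finite_gc_reducers)
  ultimately show ?thesis
    unfolding gc_achievable_def Let_def
    using assms batch_in_rsubsets[of _ Lam r]
    by (intro exI[of _ 1] exI[of _ t] exI[of _ "batch Lam r"] exI[of _ "\<lambda>k. {numbering R k}"]
        exI[of _ E] exI[of _ l])
      (auto simp: accessible_def agree_on_def R_def)
qed

theorem theorem5:
  fixes Lam r :: nat and Ka :: "nat \<Rightarrow> nat"
  assumes "0 < Lam" and "1 \<le> r" and "r \<le> Lam - 1"
    and "\<exists>\<alpha>\<in>{1..Lam - r}. Ka \<alpha> > 0"
  shows "gc_comp_load Lam r = real r \<and>
         gc_achievable Lam r Ka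
           ((1 / real (\<Sum>\<alpha>\<in>{1..Lam - r}. Ka \<alpha> * (Lam choose \<alpha>))) *
            (\<Sum>\<alpha>\<in>{1..Lam - r}. real (Ka \<alpha> * (Lam - r choose \<alpha>))
                                  / (real ((r + \<alpha>) choose r) - 1)))"
proof -
  have "r \<le> Lam"
    using assms(3) by simp
  then show ?thesis
    using assms(2)
    by (intro conjI gc_comp_load_eq gc_achievable_single_file_single_function[where
          E = "encode Lam r Ka" and l = "\<lambda>k. card (message_slots Lam r k)" and t = "iv_length Lam r"])
      (auto simp: iv_length_pos length_encode encode_eq_if_agree decode communication_load_eq)
qed

end
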